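(* Let $G(\mathcal V,\mathcal E)$ be a finite simple directed graph and $f\ge 0$ an integer, and assume Condition 1 holds for $G$. Let $A,B,F$ be a partition of $\mathcal V$ with $A$ non-empty and $|F|\le f$ ($B$ may be empty). If $B\not\rightarrow A$, then $A \Rightarrow_{\mathcal V - F} B$.
   Context: For disjoint sets $X,Y\subseteq\mathcal V$ with $Y$ non-empty, $X\rightarrow Y$ means that $X$ contains at least $f+1$ distinct nodes $i$ such that $(i,j)\in\mathcal E$ for some $j\in Y$; $X\not\rightarrow Y$ means this fails. Condition 1: for every partition $L,C,R,F$ of $\mathcal V$ (with $C$ or $F$ possibly empty) such that $L,R$ are non-empty and $|F|\le f$, either $L\cup C\rightarrow R$ or $R\cup C\rightarrow L$. An $(A,b)$-path is a directed path from some node of $A$ to the node $b\notin A$; it excludes $F$ if it contains no node of $F$; $(A,b)$-paths are disjoint if they pairwise share only $b$. For pairwise disjoint $A,B,F$ with $|F|\le f$, $A \Rightarrow_{\mathcal V - F} B$ means: $B=\emptyset$, or every $b\in B$ has at least $f+1$ pairwise disjoint $(A,b)$-paths excluding $F$. *)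

theory Defs
  imports Main
begin

definition simple_digraph :: "'a set \<Rightarrow> ('a \<times> 'a) set \<Rightarrow> bool" where
  "simple_digraph V E \<longleftrightarrow> finite V \<and> E \<subseteq> V \<times> V \<and> (\<forall>v. (v, v) \<notin> E)"

text \<open>X \<rightarrow> Y: X contains at least f+1 distinct nodes with an edge into Y.\<close>
definition reaches :: "('a \<times> 'a) set \<Rightarrow> nat \<Rightarrow> 'a set \<Rightarrow> 'a set \<Rightarrow> bool" where
  "reaches E f X Y \<longleftrightarrow> card {i \<in> X. \<exists>j \<in> Y. (i, j) \<in> E} \<ge> f + 1"

definition condition1 :: "'a set \<Rightarrow> ('a \<times> 'a) set \<Rightarrow> nat \<Rightarrow> bool" where
  "condition1 V E f \<longleftrightarrow>
    (\<forall>L C R F. L \<union> C \<union> R \<union> F = V \<and>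
       L \<inter> C = {} \<and> L \<inter> R = {} \<and> L \<inter> F = {} \<and>
       C \<inter> R = {} \<and> C \<inter> F = {} \<and> R \<inter> F = {} \<and>
       L \<noteq> {} \<and> R \<noteq> {} \<and> card F \<le> f
       \<longrightarrow> reaches E f (L \<union> C) R \<or> reaches E f (R \<union> C) L)"

definition dpath :: "('a \<times> 'a) set \<Rightarrow> 'a list \<Rightarrow> bool" where
  "dpath E p \<longleftrightarrow> p \<noteq> [] \<and> distinct p \<and>
     (\<forall>i. Suc i < length p \<longrightarrow> (p ! i, p ! Suc i) \<in> E)"

definition AB_path_excl :: "('a \<times> 'a) set \<Rightarrow> 'a set \<Rightarrow> 'a \<Rightarrow> 'a set \<Rightarrow> 'a list \<Rightarrow> bool" where
  "AB_path_excl E A b F p \<longleftrightarrow> b \<notin> A \<and> dpath E p \<and> hd p \<in> A \<and> last p = b \<and>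
     set p \<inter> F = {}"

text \<open>A \<Rightarrow>_{V-F} B (for pairwise disjoint A, B, F with |F| \<le> f, as hypotheses of use).\<close>
definition robust_reach :: "('a \<times> 'a) set \<Rightarrow> nat \<Rightarrow> 'a set \<Rightarrow> 'a set \<Rightarrow> 'a set \<Rightarrow> bool" where
  "robust_reach E f F A B \<longleftrightarrow> B = {} \<or>
     (\<forall>b \<in> B. \<exists>P. finite P \<and> card P \<ge> f + 1 \<and>
        (\<forall>p \<in> P. AB_path_excl E A b F p) \<and>
        (\<forall>p \<in> P. \<forall>q \<in> P. p \<noteq> q \<longrightarrow> set p \<inter> set q = {b}))"

end

theory Submission
  imports Defs "HOL-Library.Disjoint_Sets"
begin

text \<open>
  Fix \<open>b \<in> B\<close>. Paths from \<open>A\<close> to \<open>b\<close> that pairwise meet only in \<open>b\<close> and avoid \<open>F\<close>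
  are disjoint paths from \<open>A\<close> to the in-neighbours of \<open>b\<close> in \<open>G - F - b\<close>, extended by \<open>b\<close>.
  By Menger's theorem it therefore suffices that every set \<open>S\<close>, \<open>b \<notin> S\<close>, such that
  \<open>F \<union> S\<close> separates \<open>A\<close> from \<open>b\<close> has more than \<open>f\<close> vertices. Suppose \<open>|S| \<le> f\<close>, let \<open>R\<close>
  be the set of vertices from which \<open>b\<close> is reachable avoiding \<open>F \<union> S\<close>, and \<open>C = B - R\<close>.
  Condition 1 for the partition \<open>A, C, R, F\<close> gives \<open>A \<union> C \<rightarrow> R\<close>, because \<open>R \<union> C = B\<close> and
  \<open>B \<not>\<rightarrow> A\<close>.
  But every vertex outside \<open>R \<union> F\<close> with an edge into \<open>R\<close> lies in \<open>S\<close>, so at most \<open>f\<close>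
  vertices of \<open>A \<union> C\<close> have an edge into \<open>R\<close>: a contradiction.

  Menger's theorem is proved by induction on the number of edges, following the third proof
  in Diestel's Graph Theory.
\<close>

section \<open>Directed paths\<close>

lemma set_tl_subset: "set (tl xs) \<subseteq> set xs"
  by (cases xs) auto

lemma set_butlast_subset: "set (butlast xs) \<subseteq> set xs"
  by (auto dest: in_set_butlastD)

lemma set_eq_insert_last_butlast: "xs \<noteq> [] \<Longrightarrow> set xs = insert (last xs) (set (butlast xs))"
  by (cases xs rule: rev_cases) auto

lemma dpath_iff:
  "dpath E p \<longleftrightarrow> p \<noteq> [] \<and> distinct p \<and> successively (\<lambda>u v. (u, v) \<in> E) p"
  unfolding dpath_def successively_conv_nth by auto

lemma dpath_mono: "dpath E p \<Longrightarrow> E \<subseteq> E' \<Longrightarrow> dpath E' p"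
  unfolding dpath_def by blast

lemma dpath_Diff: "dpath (E - X) p \<Longrightarrow> dpath E p"
  using dpath_mono by blast

lemma dpath_appendD1: "dpath E (p @ q) \<Longrightarrow> p \<noteq> [] \<Longrightarrow> dpath E p"
  unfolding dpath_iff by (auto simp: successively_append_iff)

lemma dpath_appendD2: "dpath E (p @ q) \<Longrightarrow> q \<noteq> [] \<Longrightarrow> dpath E q"
  unfolding dpath_iff by (auto simp: successively_append_iff)

lemma dpath_append:
  "dpath E p \<Longrightarrow> dpath E q \<Longrightarrow> (last p, hd q) \<in> E \<Longrightarrow> set p \<inter> set q = {} \<Longrightarrow> dpath E (p @ q)"
  unfolding dpath_iff by (auto simp: successively_append_iff)

lemma dpath_append_tl:
  assumes "dpath E p" "dpath E q" "last p = hd q" "set p \<inter> set (tl q) = {}"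
  shows "dpath E (p @ tl q)"
proof (cases "tl q = []")
  case False
  then obtain v w where q: "q = v # w" "w \<noteq> []"
    by (cases q) auto
  have "dpath E w" "(v, hd w) \<in> E"
    using assms(2) q by (auto simp: dpath_iff successively_Cons)
  then show ?thesis
    using dpath_append[OF assms(1)] assms(3,4) q by simp
qed (use assms(1) in simp)

lemma dpath_Diff_edge:
  assumes "dpath E p" "x \<notin> set (butlast p) \<or> y \<notin> set (tl p)"
  shows "dpath (E - {(x, y)}) p"
proof -
  have "p ! i \<in> set (butlast p)" "p ! Suc i \<in> set (tl p)" if "Suc i < length p" for i
    using that by (auto simp: nth_butlast[symmetric] nth_tl[symmetric] simp del: nth_tl)
  then show ?thesis
    using assms unfolding dpath_def by blast
qed

lemma dpath_Diff_Id: "dpath E p \<Longrightarrow> dpath (E - Id) p"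
  unfolding dpath_def by (auto simp: nth_eq_iff_index_eq)

lemma walk_contains_dpath:
  "xs \<noteq> [] \<Longrightarrow> successively (\<lambda>u v. (u, v) \<in> E) xs \<Longrightarrow>
   \<exists>p. dpath E p \<and> hd p = hd xs \<and> last p = last xs \<and> set p \<subseteq> set xs"
proof (induction xs)
  case (Cons a xs)
  show ?case
  proof (cases "xs = []")
    case True
    then show ?thesis by (intro exI[of _ "[a]"]) (auto simp: dpath_iff)
  next
    case False
    with Cons.prems have walk: "successively (\<lambda>u v. (u, v) \<in> E) xs" and edge: "(a, hd xs) \<in> E"
      by (auto simp: successively_Cons)
    obtain p where p: "dpath E p" "hd p = hd xs" "last p = last xs" "set p \<subseteq> set xs"
      using Cons.IH[OF False walk] by blast
    show ?thesis
    proof (cases "a \<in> set p")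
      case True
      then obtain p1 p2 where "p = p1 @ a # p2"
        by (meson split_list)
      then show ?thesis
        using p False dpath_appendD2[of E p1 "a # p2"] by (intro exI[of _ "a # p2"]) auto
    next
      case False
      then have "dpath E ([a] @ p)"
        using p edge by (intro dpath_append) (auto simp: dpath_iff)
      then show ?thesis
        using p \<open>xs \<noteq> []\<close> by (intro exI[of _ "a # p"]) (auto simp: dpath_iff)
    qed
  qed
qed simp

lemma dpath_prefix_to_first:
  assumes "dpath E p" "set p \<inter> X \<noteq> {}"
  obtains p' where "dpath E p'" "hd p' = hd p" "last p' \<in> X" "set p' \<subseteq> set p"
    "set (butlast p') \<inter> X = {}"
proof -
  obtain ys v zs where p: "p = ys @ v # zs" "v \<in> X" "\<forall>u\<in>set ys. u \<notin> X"
    using split_list_first_prop[of p "\<lambda>u. u \<in> X"] assms(2) by blast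
  then have "dpath E (ys @ [v])"
    using dpath_appendD1[of E "ys @ [v]" zs] assms(1) by simp
  with p show ?thesis
    by (intro that[of "ys @ [v]"]) (auto simp: hd_append)
qed

lemma dpath_suffix_from_last:
  assumes "dpath E p" "set p \<inter> X \<noteq> {}"
  obtains p' where "dpath E p'" "last p' = last p" "hd p' \<in> X" "set p' \<subseteq> set p"
    "set (tl p') \<inter> X = {}"
proof -
  obtain ys v zs where p: "p = ys @ v # zs" "v \<in> X" "\<forall>u\<in>set zs. u \<notin> X"
    using split_list_last_prop[of p "\<lambda>u. u \<in> X"] assms(2) by blast
  then have "dpath E (v # zs)"
    using dpath_appendD2[of E ys "v # zs"] assms(1) by simp
  with p show ?thesis
    by (intro that[of "v # zs"]) auto
qed

section \<open>Menger's theorem\<close>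

definition separates :: "('a \<times> 'a) set \<Rightarrow> 'a set \<Rightarrow> 'a set \<Rightarrow> 'a set \<Rightarrow> bool" where
  "separates E A B S \<longleftrightarrow> (\<forall>p. dpath E p \<and> hd p \<in> A \<and> last p \<in> B \<longrightarrow> set p \<inter> S \<noteq> {})"

definition disjoint_paths :: "('a \<times> 'a) set \<Rightarrow> 'a set \<Rightarrow> 'a set \<Rightarrow> 'a list set \<Rightarrow> bool" where
  "disjoint_paths E A B P \<longleftrightarrow>
     finite P \<and> disjoint_family_on set P \<and> (\<forall>p\<in>P. dpath E p \<and> hd p \<in> A \<and> last p \<in> B)"

lemma separates_no_edges: "separates {} A B (A \<inter> B)"
  unfolding separates_def
proof (intro allI impI)
  fix p assume p: "dpath {} p \<and> hd p \<in> A \<and> last p \<in> B"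
  then have "p = [hd p]"
    by (cases p) (auto simp: dpath_iff successively_Cons)
  with p show "set p \<inter> (A \<inter> B) \<noteq> {}"
    by (metis IntI empty_iff last_ConsL list.set_intros(1))
qed

lemma separates_insert_endpoint:
  assumes "separates (E - {(x, y)}) A B S" "z \<in> {x, y}"
  shows "separates E A B (insert z S)"
  unfolding separates_def
proof (intro allI impI)
  fix p assume p: "dpath E p \<and> hd p \<in> A \<and> last p \<in> B"
  show "set p \<inter> insert z S \<noteq> {}"
  proof (cases "z \<in> set p")
    case False
    then have "x \<notin> set (butlast p) \<or> y \<notin> set (tl p)"
      using assms(2) set_butlast_subset[of p] set_tl_subset[of p] by auto
    with p have "dpath (E - {(x, y)}) p"
      by (simp add: dpath_Diff_edge)
    with p show ?thesis
      using assms(1) unfolding separates_def by blast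
  qed blast
qed

lemma separates_through_source:
  assumes "separates E A B X" "x \<in> X" "separates (E - {(x, y)}) A X T"
  shows "separates E A B T"
  unfolding separates_def
proof (intro allI impI)
  fix p assume p: "dpath E p \<and> hd p \<in> A \<and> last p \<in> B"
  then have "set p \<inter> X \<noteq> {}"
    using assms(1) unfolding separates_def by blast
  then obtain p' where p': "dpath E p'" "hd p' = hd p" "last p' \<in> X" "set p' \<subseteq> set p"
    "set (butlast p') \<inter> X = {}"
    using dpath_prefix_to_first p by metis
  have "dpath (E - {(x, y)}) p'"
    using p'(1,5) assms(2) by (auto intro: dpath_Diff_edge)
  then show "set p \<inter> T \<noteq> {}"
    using assms(3) p p' unfolding separates_def by fastforce
qed

lemma separates_through_target:
  assumes "separates E A B Y" "y \<in> Y" "separates (E - {(x, y)}) Y B T"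
  shows "separates E A B T"
  unfolding separates_def
proof (intro allI impI)
  fix p assume p: "dpath E p \<and> hd p \<in> A \<and> last p \<in> B"
  then have "set p \<inter> Y \<noteq> {}"
    using assms(1) unfolding separates_def by blast
  then obtain p' where p': "dpath E p'" "last p' = last p" "hd p' \<in> Y" "set p' \<subseteq> set p"
    "set (tl p') \<inter> Y = {}"
    using dpath_suffix_from_last p by metis
  have "dpath (E - {(x, y)}) p'"
    using p'(1,5) assms(2) by (auto intro: dpath_Diff_edge)
  then show "set p \<inter> T \<noteq> {}"
    using assms(3) p p' unfolding separates_def by fastforce
qed

lemma separates_Diff_loop: "separates (E - {(x, x)}) A B S \<Longrightarrow> separates E A B S"
  unfolding separates_def using dpath_Diff_Id dpath_mono[of "E - Id" _ "E - {(x, x)}"] by blast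

lemma common_vertex_in_separator:
  assumes "separates E A B S"
    and "dpath E p" "hd p \<in> A" "set (butlast p) \<inter> S = {}"
    and "dpath E q" "last q \<in> B" "set (tl q) \<inter> S = {}"
    and "v \<in> set p" "v \<in> set q"
  shows "v \<in> S"
proof (rule ccontr)
  assume "v \<notin> S"
  obtain p1 p2 where p: "p = p1 @ v # p2"
    using assms(8) by (meson split_list)
  obtain q1 q2 where q: "q = q1 @ v # q2"
    using assms(9) by (meson split_list)
  have "successively (\<lambda>u w. (u, w) \<in> E) (p1 @ v # q2)"
    using assms(2,5) p q by (auto simp: dpath_iff successively_append_iff)
  then obtain r where r: "dpath E r" "hd r = hd (p1 @ v # q2)" "last r = last (p1 @ v # q2)"
    "set r \<subseteq> set (p1 @ v # q2)"
    using walk_contains_dpath by blast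
  have "hd r \<in> A" "last r \<in> B"
    using r(2,3) p q assms(3,6) by (auto simp: hd_append)
  moreover have "set p1 \<subseteq> set (butlast p)" "set q2 \<subseteq> set (tl q)"
    using p q by (simp_all add: butlast_append) (cases q1; auto)
  then have "set (p1 @ v # q2) \<inter> S = {}"
    using assms(4,7) \<open>v \<notin> S\<close> by auto
  ultimately show False
    using assms(1) r unfolding separates_def by blast
qed

lemma disjoint_paths_mono: "disjoint_paths E A B P \<Longrightarrow> E \<subseteq> E' \<Longrightarrow> disjoint_paths E' A B P"
  unfolding disjoint_paths_def using dpath_mono by blast

lemma disjoint_paths_image:
  assumes "disjoint_paths E A B P"
    and "\<And>p. p \<in> P \<Longrightarrow> dpath E' (g p) \<and> hd (g p) \<in> A' \<and> last (g p) \<in> B' \<and> set (g p) \<subseteq> set p"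
  shows "disjoint_paths E' A' B' (g ` P) \<and> card (g ` P) = card P"
proof -
  have disj: "set (g p) \<inter> set (g p') = {}" if "p \<in> P" "p' \<in> P" "p \<noteq> p'" for p p'
    using that assms disjoint_family_onD[of set P p p'] unfolding disjoint_paths_def by blast
  moreover have "g p \<noteq> []" if "p \<in> P" for p
    using assms(2)[OF that] by (simp add: dpath_iff)
  ultimately have "inj_on g P"
    by (metis inf.idem inj_onI set_empty)
  moreover have "disjoint_family_on set (g ` P)"
    unfolding disjoint_family_on_def using disj by blast
  ultimately show ?thesis
    using assms unfolding disjoint_paths_def by (auto simp: card_image)
qed

lemma disjoint_paths_inj_on_last: "disjoint_paths E A B P \<Longrightarrow> inj_on last P"
proof (rule inj_onI, rule ccontr)
  fix p q assume P: "disjoint_paths E A B P" and pq: "p \<in> P" "q \<in> P" "last p = last q" "p \<noteq> q"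
  then have "set p \<inter> set q = {}" "p \<noteq> []" "q \<noteq> []"
    unfolding disjoint_paths_def by (auto simp: dpath_iff dest: disjoint_family_onD)
  then show False
    using pq(3) last_in_set by fastforce
qed

lemma disjoint_paths_inj_on_hd: "disjoint_paths E A B P \<Longrightarrow> inj_on hd P"
proof (rule inj_onI, rule ccontr)
  fix p q assume P: "disjoint_paths E A B P" and pq: "p \<in> P" "q \<in> P" "hd p = hd q" "p \<noteq> q"
  then have "set p \<inter> set q = {}" "p \<noteq> []" "q \<noteq> []"
    unfolding disjoint_paths_def by (auto simp: dpath_iff dest: disjoint_family_onD)
  then show False
    using pq(3) hd_in_set by fastforce
qed

lemma disjoint_paths_trim_end:
  assumes "disjoint_paths E A X P" "card P = card X" "finite X"
  obtains P' where "disjoint_paths E A X P'" "bij_betw last P' X"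
    "\<forall>p\<in>P'. set (butlast p) \<inter> X = {}"
proof -
  have "\<exists>p'. dpath E p' \<and> hd p' \<in> A \<and> last p' \<in> X \<and> set p' \<subseteq> set p \<and> set (butlast p') \<inter> X = {}"
    if "p \<in> P" for p
  proof -
    have "dpath E p" "hd p \<in> A" "last p \<in> X"
      using assms(1) that unfolding disjoint_paths_def by auto
    moreover then have "set p \<inter> X \<noteq> {}"
      using last_in_set by (fastforce simp: dpath_iff)
    ultimately show ?thesis
      using dpath_prefix_to_first by metis
  qed
  then obtain g where g: "\<And>p. p \<in> P \<Longrightarrow> dpath E (g p) \<and> hd (g p) \<in> A \<and> last (g p) \<in> X \<and>
      set (g p) \<subseteq> set p \<and> set (butlast (g p)) \<inter> X = {}"
    by metis
  then have "disjoint_paths E A X (g ` P) \<and> card (g ` P) = card P"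
    by (intro disjoint_paths_image[OF assms(1)]) auto
  then have P': "disjoint_paths E A X (g ` P)" "card (g ` P) = card X"
    using assms(2) by auto
  have inj: "inj_on last (g ` P)"
    by (rule disjoint_paths_inj_on_last[OF P'(1)])
  then have "last ` g ` P = X"
    using P' assms(3) by (intro card_subset_eq) (auto simp: disjoint_paths_def card_image)
  with inj have "bij_betw last (g ` P) X"
    unfolding bij_betw_def by blast
  then show ?thesis
    using that P'(1) g by blast
qed

lemma disjoint_paths_trim_start:
  assumes "disjoint_paths E X B P" "card P = card X" "finite X"
  obtains P' where "disjoint_paths E X B P'" "bij_betw hd P' X"
    "\<forall>p\<in>P'. set (tl p) \<inter> X = {}"
proof -
  have "\<exists>p'. dpath E p' \<and> hd p' \<in> X \<and> last p' \<in> B \<and> set p' \<subseteq> set p \<and> set (tl p') \<inter> X = {}"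
    if "p \<in> P" for p
  proof -
    have "dpath E p" "hd p \<in> X" "last p \<in> B"
      using assms(1) that unfolding disjoint_paths_def by auto
    moreover then have "set p \<inter> X \<noteq> {}"
      using hd_in_set by (fastforce simp: dpath_iff)
    ultimately show ?thesis
      using dpath_suffix_from_last by metis
  qed
  then obtain g where g: "\<And>p. p \<in> P \<Longrightarrow> dpath E (g p) \<and> hd (g p) \<in> X \<and> last (g p) \<in> B \<and>
      set (g p) \<subseteq> set p \<and> set (tl (g p)) \<inter> X = {}"
    by metis
  then have "disjoint_paths E X B (g ` P) \<and> card (g ` P) = card P"
    by (intro disjoint_paths_image[OF assms(1)]) auto
  then have P': "disjoint_paths E X B (g ` P)" "card (g ` P) = card X"
    using assms(2) by auto
  have inj: "inj_on hd (g ` P)"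
    by (rule disjoint_paths_inj_on_hd[OF P'(1)])
  then have "hd ` g ` P = X"
    using P' assms(3) by (intro card_subset_eq) (auto simp: disjoint_paths_def card_image)
  with inj have "bij_betw hd (g ` P) X"
    unfolding bij_betw_def by blast
  then show ?thesis
    using that P'(1) g by blast
qed

text \<open>
  The inductive step when deleting the edge \<open>xy\<close> creates a separator \<open>S\<close> with \<open>|S| < k\<close>:
  then \<open>|S| = k - 1\<close>, and \<open>P\<close>, \<open>Q\<close> are \<open>k\<close> disjoint \<open>A\<close>--\<open>(S + x)\<close> and \<open>(S + y)\<close>--\<open>B\<close> paths
  in \<open>G - xy\<close>. Since \<open>S\<close> separates \<open>A\<close> from \<open>B\<close> in \<open>G - xy\<close>, a path of \<open>P\<close> and a path of \<open>Q\<close>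
  can only meet in a common endpoint in \<open>S\<close>, so each path of \<open>P\<close> can be glued to the path of
  \<open>Q\<close> starting at the corresponding vertex (at \<open>y\<close> via the edge \<open>xy\<close> if it ends in \<open>x\<close>).
\<close>

locale separator_split =
  fixes E :: "('a \<times> 'a) set" and x y :: 'a and A B S :: "'a set" and P Q :: "'a list set"
  assumes edge: "(x, y) \<in> E" "x \<noteq> y"
    and outside: "x \<notin> S" "y \<notin> S"
    and separator: "separates (E - {(x, y)}) A B S"
    and P: "disjoint_paths (E - {(x, y)}) A (insert x S) P" "bij_betw last P (insert x S)"
      "\<forall>p\<in>P. set (butlast p) \<inter> insert x S = {}"
    and Q: "disjoint_paths (E - {(x, y)}) (insert y S) B Q" "bij_betw hd Q (insert y S)"
      "\<forall>q\<in>Q. set (tl q) \<inter> insert y S = {}"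
begin

definition target :: "'a \<Rightarrow> 'a" where
  "target v = (if v = x then y else v)"

definition partner :: "'a list \<Rightarrow> 'a list" where
  "partner p = the_inv_into Q hd (target (last p))"

definition link :: "'a list \<Rightarrow> 'a list" where
  "link p = (if last p = x then p @ partner p else p @ tl (partner p))"

lemma path_P: "p \<in> P \<Longrightarrow> dpath (E - {(x, y)}) p \<and> hd p \<in> A \<and> last p \<in> insert x S"
  using P(1) unfolding disjoint_paths_def by blast

lemma path_Q: "q \<in> Q \<Longrightarrow> dpath (E - {(x, y)}) q \<and> hd q \<in> insert y S \<and> last q \<in> B"
  using Q(1) unfolding disjoint_paths_def by blast

lemma common_vertex:
  assumes "p \<in> P" "q \<in> Q" "v \<in> set p" "v \<in> set q"
  shows "v \<in> S" "v = last p" "v = hd q"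
proof -
  show "v \<in> S"
    using common_vertex_in_separator[OF separator] path_P[OF assms(1)] path_Q[OF assms(2)]
      P(3) Q(3) assms by blast
  moreover have "p \<noteq> []" "q \<noteq> []"
    using path_P[OF assms(1)] path_Q[OF assms(2)] by (auto simp: dpath_iff)
  moreover have "v \<notin> set (butlast p)" "v \<notin> set (tl q)" if "v \<in> S"
    using P(3) Q(3) assms(1,2) that by auto
  ultimately show "v = last p" "v = hd q"
    using assms(3,4) set_eq_insert_last_butlast[of p] list.set_sel(1)[of q] list.collapse[of q]
    by (auto simp del: list.collapse) (metis set_ConsD)
qed

lemma partner: "p \<in> P \<Longrightarrow> partner p \<in> Q \<and> hd (partner p) = target (last p)"
proof -
  assume "p \<in> P"
  then have "target (last p) \<in> insert y S"
    using path_P unfolding target_def by auto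
  then show ?thesis
    unfolding partner_def using Q(2)
    by (metis bij_betw_def f_the_inv_into_f_bij_betw the_inv_into_into order_refl)
qed

lemma target_last_eq_iff:
  assumes "p \<in> P" "p' \<in> P"
  shows "target (last p) = target (last p') \<longleftrightarrow> p = p'"
proof
  assume "target (last p) = target (last p')"
  moreover have "last p \<in> insert x S" "last p' \<in> insert x S"
    using path_P assms by auto
  ultimately have "last p = last p'"
    using outside unfolding target_def by (auto split: if_splits)
  then show "p = p'"
    using P(2) assms unfolding bij_betw_def by (meson inj_onD)
qed simp

lemma link_path:
  assumes "p \<in> P"
  shows "dpath E (link p) \<and> hd (link p) \<in> A \<and> last (link p) \<in> B"
proof -
  define q where "q = partner p"
  have p: "dpath E p" "hd p \<in> A"
    using path_P[OF assms] dpath_Diff by blast+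
  then have "p \<noteq> []"
    by (simp add: dpath_iff)
  have q: "q \<in> Q" "hd q = target (last p)"
    using partner[OF assms] q_def by auto
  then have "dpath E q" "last q \<in> B"
    using path_Q[of q] dpath_Diff by blast+
  then have "q \<noteq> []"
    by (simp add: dpath_iff)
  show ?thesis
  proof (cases "last p = x")
    case True
    then have "set p \<inter> set q = {}"
      using common_vertex[OF assms q(1)] outside by blast
    moreover have "(last p, hd q) \<in> E"
      using q(2) edge True unfolding target_def by simp
    ultimately have "dpath E (p @ q)"
      using dpath_append p(1) \<open>dpath E q\<close> by blast
    then show ?thesis
      using True p \<open>p \<noteq> []\<close> \<open>q \<noteq> []\<close> \<open>last q \<in> B\<close> unfolding link_def q_def by simp
  next
    case False
    then have "last p = hd q"
      using q(2) unfolding target_def by simp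
    moreover have "v \<notin> S" if "v \<in> set (tl q)" for v
      using Q(3) q(1) that by blast
    then have "set p \<inter> set (tl q) = {}"
      using common_vertex(1)[OF assms q(1)] set_tl_subset[of q] by blast
    ultimately have "dpath E (p @ tl q)"
      using dpath_append_tl p \<open>dpath E q\<close> by blast
    moreover have "last (p @ tl q) = last q"
      using \<open>last p = hd q\<close> \<open>q \<noteq> []\<close> \<open>p \<noteq> []\<close> by (cases q) auto
    ultimately show ?thesis
      using False p \<open>p \<noteq> []\<close> \<open>last q \<in> B\<close> unfolding link_def q_def by simp
  qed
qed

lemma link_disjoint:
  assumes "p \<in> P" "p' \<in> P" "p \<noteq> p'"
  shows "set (link p) \<inter> set (link p') = {}"
proof -
  have cross: "set p \<inter> set (partner p') = {}" if "p \<in> P" "p' \<in> P" "p \<noteq> p'" for p p'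
  proof (rule ccontr)
    assume "set p \<inter> set (partner p') \<noteq> {}"
    then obtain v where "v \<in> set p" "v \<in> set (partner p')"
      by blast
    then have "v \<in> S" "v = last p" "v = target (last p')"
      using common_vertex[OF that(1)] partner[OF that(2)] by metis+
    then have "target (last p) = target (last p')"
      using outside unfolding target_def by auto
    then show False
      using target_last_eq_iff that by blast
  qed
  have "set p \<inter> set p' = {}"
    using P(1) assms unfolding disjoint_paths_def by (auto dest: disjoint_family_onD)
  moreover have "partner p \<noteq> partner p'"
    using partner target_last_eq_iff assms by metis
  then have "set (partner p) \<inter> set (partner p') = {}"
    using Q(1) partner assms unfolding disjoint_paths_def by (auto dest: disjoint_family_onD)
  moreover have link_subset: "set (link p) \<subseteq> set p \<union> set (partner p)" for p
    using set_tl_subset[of "partner p"] unfolding link_def by auto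
  ultimately show ?thesis
    using cross[OF assms] cross[OF assms(2,1) assms(3)[symmetric]]
      link_subset[of p] link_subset[of p'] by blast
qed

lemma disjoint_paths_link: "disjoint_paths E A B (link ` P) \<and> card (link ` P) = card P"
proof -
  have "inj_on link P"
  proof (rule inj_onI, rule ccontr)
    fix p p' assume "p \<in> P" "p' \<in> P" "link p = link p'" "p \<noteq> p'"
    then have "set (link p) = {}"
      using link_disjoint by force
    then show False
      using link_path[OF \<open>p \<in> P\<close>] by (simp add: dpath_iff)
  qed
  moreover have "disjoint_family_on set (link ` P)"
    using link_disjoint unfolding disjoint_family_on_def by blast
  ultimately show ?thesis
    using link_path P(1) unfolding disjoint_paths_def by (auto simp: card_image)
qed

end

lemma menger_step:
  assumes edge: "(x, y) \<in> E" "x \<noteq> y"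
    and IH: "\<And>A B k. (\<And>S. finite S \<Longrightarrow> separates (E - {(x, y)}) A B S \<Longrightarrow> k \<le> card S) \<Longrightarrow>
      \<exists>P. disjoint_paths (E - {(x, y)}) A B P \<and> card P = k"
    and large: "\<And>S. finite S \<Longrightarrow> separates E A B S \<Longrightarrow> k \<le> card S"
  shows "\<exists>P. disjoint_paths E A B P \<and> card P = k"
proof (cases "\<exists>S. finite S \<and> separates (E - {(x, y)}) A B S \<and> card S < k")
  case False
  then obtain P where "disjoint_paths (E - {(x, y)}) A B P" "card P = k"
    using IH[of A B k] by (meson not_le)
  then show ?thesis
    using disjoint_paths_mono by blast
next
  case True
  then obtain S where S: "finite S" "separates (E - {(x, y)}) A B S" "card S < k"
    by blast
  have sep: "separates E A B (insert x S)" "separates E A B (insert y S)"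
    using separates_insert_endpoint[OF S(2)] by auto
  then have "k \<le> card (insert x S)" "k \<le> card (insert y S)"
    using large S(1) by auto
  then have outside: "x \<notin> S" "y \<notin> S" and card: "card (insert x S) = k" "card (insert y S) = k"
    using S(1,3) by (auto simp: card_insert_if split: if_splits)
  obtain P0 where P0: "disjoint_paths (E - {(x, y)}) A (insert x S) P0" "card P0 = k"
    using IH[of A "insert x S" k] separates_through_source[OF sep(1) insertI1] large by blast
  obtain P where P: "disjoint_paths (E - {(x, y)}) A (insert x S) P" "bij_betw last P (insert x S)"
    "\<forall>p\<in>P. set (butlast p) \<inter> insert x S = {}"
    using disjoint_paths_trim_end[OF P0(1)] P0(2) card S(1) by auto
  obtain Q0 where Q0: "disjoint_paths (E - {(x, y)}) (insert y S) B Q0" "card Q0 = k"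
    using IH[of "insert y S" B k] separates_through_target[OF sep(2) insertI1] large by blast
  obtain Q where Q: "disjoint_paths (E - {(x, y)}) (insert y S) B Q" "bij_betw hd Q (insert y S)"
    "\<forall>q\<in>Q. set (tl q) \<inter> insert y S = {}"
    using disjoint_paths_trim_start[OF Q0(1)] Q0(2) card S(1) by auto
  interpret separator_split E x y A B S P Q
    using edge outside S(2) P Q by unfold_locales
  show ?thesis
    using disjoint_paths_link bij_betw_same_card[OF P(2)] card by metis
qed

theorem menger:
  assumes "finite E" and "\<And>S. finite S \<Longrightarrow> separates E A B S \<Longrightarrow> k \<le> card S"
  shows "\<exists>P. disjoint_paths E A B P \<and> card P = k"
  using assms
proof (induction E arbitrary: A B k rule: finite_remove_induct)
  case empty
  obtain T where T: "T \<subseteq> A \<inter> B" "finite T" "card T = k"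
  proof (cases "finite (A \<inter> B)")
    case True
    then have "k \<le> card (A \<inter> B)"
      using empty.prems separates_no_edges by blast
    then show ?thesis
      using obtain_subset_with_card_n that by metis
  next
    case False
    then show ?thesis
      using infinite_arbitrarily_large that by metis
  qed
  have "disjoint_paths {} A B ((\<lambda>v. [v]) ` T)"
    using T unfolding disjoint_paths_def disjoint_family_on_def by (auto simp: dpath_iff)
  moreover have "card ((\<lambda>v. [v]) ` T) = k"
    using T(3) by (simp add: card_image inj_on_def)
  ultimately show ?case
    by blast
next
  case (remove E)
  then obtain x y where xy: "(x, y) \<in> E"
    by auto
  show ?case
  proof (cases "x = y")
    case True
    have "separates E A B S" if "separates (E - {(x, y)}) A B S" for S
      using that unfolding True by (rule separates_Diff_loop)
    then have "k \<le> card S" if "finite S" "separates (E - {(x, y)}) A B S" for S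
      using remove.prems that by blast
    then obtain P where "disjoint_paths (E - {(x, y)}) A B P" "card P = k"
      using remove.IH[OF xy] by blast
    then show ?thesis
      using disjoint_paths_mono by blast
  next
    case False
    then show ?thesis
      using menger_step[OF xy False remove.IH[OF xy] remove.prems] by blast
  qed
qed

section \<open>Robust reachability\<close>

lemma dpath_restrict:
  assumes "dpath E p" "set p \<subseteq> U"
  shows "dpath (E \<inter> U \<times> U) p"
  using assms unfolding dpath_def by (simp add: subset_iff)

lemma set_dpath_restrict:
  assumes "dpath (E \<inter> U \<times> U) p" "hd p \<in> U"
  shows "set p \<subseteq> U"
proof
  fix v assume "v \<in> set p"
  then obtain i where i: "i < length p" "v = p ! i"
    by (auto simp: in_set_conv_nth)
  show "v \<in> U"
  proof (cases i)
    case 0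
    then show ?thesis
      using i assms(2) by (simp add: hd_conv_nth)
  next
    case (Suc j)
    then show ?thesis
      using i assms(1) unfolding dpath_def by blast
  qed
qed

lemma dpath_Cons_shortcut:
  assumes "dpath E p" "(v, hd p) \<in> E"
  obtains p' where "dpath E p'" "hd p' = v" "last p' = last p" "set p' \<subseteq> insert v (set p)"
proof -
  have "successively (\<lambda>u w. (u, w) \<in> E) (v # p)"
    using assms by (auto simp: dpath_iff successively_Cons)
  moreover have "p \<noteq> []"
    using assms(1) by (simp add: dpath_iff)
  ultimately show ?thesis
    using walk_contains_dpath[of "v # p" E] that by auto
qed

lemma separates_via_in_neighbours:
  assumes "b \<notin> A"
    and "separates (E \<inter> (- insert b F) \<times> (- insert b F)) A {u. u \<notin> insert b F \<and> (u, b) \<in> E} S"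
  shows "separates E A {b} (F \<union> (S - {b}))"
  unfolding separates_def
proof (intro allI impI notI)
  fix p assume p: "dpath E p \<and> hd p \<in> A \<and> last p \<in> {b}"
    and avoid: "set p \<inter> (F \<union> (S - {b})) = {}"
  then obtain p' where p': "p = p' @ [b]"
    by (metis dpath_iff singletonD snoc_eq_iff_butlast)
  then have "p' \<noteq> []"
    using p assms(1) by auto
  then have "dpath E p'" "(last p', b) \<in> E" "b \<notin> set p'" "hd p' \<in> A"
    using p p' by (auto simp: dpath_iff successively_append_iff)
  moreover have "set p' \<subseteq> - insert b F"
    using avoid p' \<open>b \<notin> set p'\<close> by auto
  moreover have "last p' \<in> set p'"
    using \<open>p' \<noteq> []\<close> by simp
  ultimately have "dpath (E \<inter> (- insert b F) \<times> (- insert b F)) p'" "hd p' \<in> A"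
    "last p' \<in> {u. u \<notin> insert b F \<and> (u, b) \<in> E}"
    using dpath_restrict by auto
  then have "set p' \<inter> S \<noteq> {}"
    using assms(2) unfolding separates_def by blast
  then show False
    using avoid p' \<open>b \<notin> set p'\<close> by auto
qed

lemma disjoint_fan_to_vertex:
  assumes "finite E" "b \<notin> A" "b \<notin> F" "A \<inter> F = {}"
    and large: "\<And>S. finite S \<Longrightarrow> b \<notin> S \<Longrightarrow> separates E A {b} (F \<union> S) \<Longrightarrow> k \<le> card S"
  shows "\<exists>P. finite P \<and> card P = k \<and> (\<forall>p\<in>P. AB_path_excl E A b F p) \<and>
    (\<forall>p\<in>P. \<forall>q\<in>P. p \<noteq> q \<longrightarrow> set p \<inter> set q = {b})"
proof -
  define U where "U = - insert b F"
  define N where "N = {u. u \<notin> insert b F \<and> (u, b) \<in> E}"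
  have "\<exists>P. disjoint_paths (E \<inter> U \<times> U) A N P \<and> card P = k"
  proof (rule menger)
    fix S assume S: "finite S" "separates (E \<inter> U \<times> U) A N S"
    then have "k \<le> card (S - {b})"
      using large separates_via_in_neighbours[OF assms(2)] unfolding U_def N_def by blast
    then show "k \<le> card S"
      using card_Diff1_le[of S b] by linarith
  qed (use assms(1) in simp)
  then obtain P where P: "disjoint_paths (E \<inter> U \<times> U) A N P" "card P = k"
    by blast
  have extend: "AB_path_excl E A b F (p @ [b]) \<and> b \<notin> set p" if "p \<in> P" for p
  proof -
    have p: "dpath (E \<inter> U \<times> U) p" "hd p \<in> A" "last p \<in> N"
      using P(1) that unfolding disjoint_paths_def by auto
    then have "set p \<subseteq> U"
      using set_dpath_restrict assms(2,4) unfolding U_def by blast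
    moreover have "dpath E p"
      using p(1) dpath_mono by blast
    ultimately have "dpath E (p @ [b])"
      using p(3) unfolding U_def N_def by (intro dpath_append) (auto simp: dpath_iff)
    moreover have "p \<noteq> []"
      using p(1) by (simp add: dpath_iff)
    ultimately show ?thesis
      using \<open>set p \<subseteq> U\<close> p(2) assms(2,3) unfolding AB_path_excl_def U_def by auto
  qed
  have "set (p @ [b]) \<inter> set (q @ [b]) = {b}" if "p \<in> P" "q \<in> P" "p \<noteq> q" for p q
    using P(1) that unfolding disjoint_paths_def by (auto dest: disjoint_family_onD)
  moreover have "card ((\<lambda>p. p @ [b]) ` P) = k"
    using P(2) by (simp add: card_image inj_on_def)
  ultimately show ?thesis
    using extend P(1) unfolding disjoint_paths_def
    by (intro exI[of _ "(\<lambda>p. p @ [b]) ` P"]) blast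
qed

definition reach_avoiding :: "('a \<times> 'a) set \<Rightarrow> 'a set \<Rightarrow> 'a \<Rightarrow> 'a set" where
  "reach_avoiding E X b = {v. \<exists>p. dpath E p \<and> hd p = v \<and> last p = b \<and> set p \<inter> X = {}}"

lemma reach_avoiding_disjoint: "reach_avoiding E X b \<inter> X = {}"
proof -
  have "hd p \<notin> X" if "dpath E p" "set p \<inter> X = {}" for p
  proof -
    have "hd p \<in> set p"
      using that(1) by (simp add: dpath_iff)
    then show ?thesis
      using that(2) by blast
  qed
  then show ?thesis
    unfolding reach_avoiding_def by blast
qed

lemma reach_avoiding_closed:
  assumes "i \<notin> X" "j \<in> reach_avoiding E X b" "(i, j) \<in> E"
  shows "i \<in> reach_avoiding E X b"
proof -
  obtain p where p: "dpath E p" "hd p = j" "last p = b" "set p \<inter> X = {}"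
    using assms(2) unfolding reach_avoiding_def by blast
  then obtain p' where "dpath E p'" "hd p' = i" "last p' = b" "set p' \<subseteq> insert i (set p)"
    using dpath_Cons_shortcut[OF p(1), of i] assms(3) by blast
  then show ?thesis
    using assms(1) p(4) unfolding reach_avoiding_def by blast
qed

lemma condition1_separator_large:
  assumes cond: "condition1 V E f"
    and part: "A \<union> B \<union> F = V" "A \<inter> B = {}" "A \<inter> F = {}" "B \<inter> F = {}" "A \<noteq> {}" "card F \<le> f"
    and "\<not> reaches E f B A" "b \<in> B"
    and S: "finite S" "b \<notin> S" "separates E A {b} (F \<union> S)"
  shows "f < card S"
proof (rule ccontr)
  assume "\<not> f < card S"
  define R where "R = V \<inter> reach_avoiding E (F \<union> S) b"
  define C where "C = V - F - A - R"
  have "b \<in> R"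
    using \<open>b \<in> B\<close> S(2) part unfolding R_def reach_avoiding_def
    by (auto simp: dpath_iff intro!: exI[of _ "[b]"])
  have "A \<inter> R = {}"
  proof (rule ccontr)
    assume "A \<inter> R \<noteq> {}"
    then obtain p where "dpath E p" "hd p \<in> A" "last p = b" "set p \<inter> (F \<union> S) = {}"
      unfolding R_def reach_avoiding_def by blast
    then show False
      using S(3) unfolding separates_def by blast
  qed
  have "R \<subseteq> V - F - S"
    using reach_avoiding_disjoint[of E "F \<union> S" b] unfolding R_def by blast
  have "reaches E f (A \<union> C) R \<or> reaches E f (R \<union> C) A"
    by (rule cond[unfolded condition1_def, rule_format, of A C R F])
      (use \<open>b \<in> R\<close> \<open>A \<inter> R = {}\<close> \<open>R \<subseteq> V - F - S\<close> part in \<open>auto simp: C_def\<close>)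
  moreover have "R \<union> C = B"
    using \<open>A \<inter> R = {}\<close> \<open>R \<subseteq> V - F - S\<close> part unfolding C_def by blast
  ultimately have "reaches E f (A \<union> C) R"
    using \<open>\<not> reaches E f B A\<close> by simp
  moreover have "{i \<in> A \<union> C. \<exists>j \<in> R. (i, j) \<in> E} \<subseteq> S"
  proof
    fix i assume "i \<in> {i \<in> A \<union> C. \<exists>j \<in> R. (i, j) \<in> E}"
    then obtain j where "i \<in> A \<union> C" "j \<in> R" "(i, j) \<in> E"
      by blast
    moreover have "i \<notin> R" "i \<in> V - F"
      using calculation(1) \<open>A \<inter> R = {}\<close> part unfolding C_def by auto
    ultimately show "i \<in> S"
      using reach_avoiding_closed[of i "F \<union> S" j E b] unfolding R_def by blast
  qed
  then have "card {i \<in> A \<union> C. \<exists>j \<in> R. (i, j) \<in> E} \<le> card S"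
    using card_mono S(1) by blast
  ultimately show False
    using \<open>\<not> f < card S\<close> unfolding reaches_def by simp
qed

theorem lemma5:
  fixes V :: "'a set" and E :: "('a \<times> 'a) set" and f :: nat and A B F :: "'a set"
  assumes "simple_digraph V E"
    and "condition1 V E f"
    and "A \<union> B \<union> F = V" and "A \<inter> B = {}" and "A \<inter> F = {}" and "B \<inter> F = {}"
    and "A \<noteq> {}" and "card F \<le> f"
    and "\<not> reaches E f B A"
  shows "robust_reach E f F A B"
proof -
  have "finite E"
    using assms(1) unfolding simple_digraph_def by (auto intro: finite_subset[of E "V \<times> V"])
  have fan: "\<exists>P. finite P \<and> card P = f + 1 \<and> (\<forall>p\<in>P. AB_path_excl E A b F p) \<and>
      (\<forall>p\<in>P. \<forall>q\<in>P. p \<noteq> q \<longrightarrow> set p \<inter> set q = {b})" if "b \<in> B" for b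
  proof (rule disjoint_fan_to_vertex)
    show "finite E" "A \<inter> F = {}"
      by fact+
    show "b \<notin> A" "b \<notin> F"
      using that assms(4,6) by auto
    show "f + 1 \<le> card S" if "finite S" "b \<notin> S" "separates E A {b} (F \<union> S)" for S
      using condition1_separator_large[OF assms(2-9) \<open>b \<in> B\<close> that] by simp
  qed
  show ?thesis
    unfolding robust_reach_def
  proof (intro disjI2 ballI)
    fix b assume "b \<in> B"
    then obtain P where "finite P" "card P = f + 1" "\<forall>p\<in>P. AB_path_excl E A b F p"
      "\<forall>p\<in>P. \<forall>q\<in>P. p \<noteq> q \<longrightarrow> set p \<inter> set q = {b}"
      using fan[OF \<open>b \<in> B\<close>] by blast
    then show "\<exists>P. finite P \<and> f + 1 \<le> card P \<and> (\<forall>p\<in>P. AB_path_excl E A b F p) \<and>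
        (\<forall>p\<in>P. \<forall>q\<in>P. p \<noteq> q \<longrightarrow> set p \<inter> set q = {b})"
      by auto
  qed
qed

end
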